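(* Let $q>0$ and let $Q_1,Q_2,\dots\in\mathcal{P}_q$. Let $\mathcal{G}_\kappa$ be the RKHS of $\mathbb{R}^D$-valued functions of a matrix-valued kernel $\kappa:\mathbb{R}^D\times\mathbb{R}^D\to\mathbb{R}^{D\times D}$. Suppose that for every $\varepsilon>0$ there exist $r_\varepsilon>0$ and $g\in\mathcal{G}_\kappa$ with $\mathcal{T}_Pg(x)\ge\|x\|_2^q\mathbf{1}\{\|x\|_2>r_\varepsilon\}-\varepsilon$ for all $x\in\mathbb{R}^D$. If $\mathcal{S}(Q_n,\mathcal{T}_P,\mathcal{G}_\kappa)\to0$ as $n\to\infty$, then $(Q_n)$ has uniformly integrable $q$-th moments.
   Context: $\mathcal{T}_P$ is the diffusion Stein operator $\mathcal{T}_Pg(x)=\frac1{p(x)}\langle\nabla,p(x)m(x)g(x)\rangle=2\langle b(x),g(x)\rangle+\langle m(x),\nabla g(x)\rangle$ for a target density $p$ on $\mathbb{R}^D$, where $m=\sigma\sigma^\top+c$ with $c$ skew-symmetric, $b=\langle\nabla,pm\rangle/(2p)$ (column-wise divergence $\langle\nabla,F\rangle_i=\sum_j\partial_jF_{ji}$), $(\nabla g)_{ij}=\partial_ig_j$ and $\langle\cdot,\cdot\rangle$ the Frobenius pairing. $\mathcal{S}(Q,\mathcal{T}_P,\mathcal{G}_\kappa)=\sup_{\|g\|_{\mathcal{G}_\kappa}\le1}|\mathbb{E}_{Y\sim Q}[\mathcal{T}_Pg(Y)]|$. $\mathcal{P}_q$ is the set of probability measures with finite $q$-th moment; $(Q_n)$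 has uniformly integrable $q$-th moments if $\lim_{r\to\infty}\limsup_{n}\int_{\{\|x\|_2>r\}}\|x\|_2^q dQ_n=0$. *)

theory Defs
  imports "HOL-Probability.Probability"
begin

definition partial :: "'n::finite \<Rightarrow> (real^'n \<Rightarrow> real) \<Rightarrow> real^'n \<Rightarrow> real" where
  "partial i f x = deriv (\<lambda>t. f (x + t *\<^sub>R axis i 1)) 0"

definition drift :: "(real^'n::finite \<Rightarrow> real) \<Rightarrow> (real^'n \<Rightarrow> real^'n^'n) \<Rightarrow> real^'n \<Rightarrow> real^'n" where
  "drift p m x = (\<chi> i. (\<Sum>j\<in>UNIV. partial j (\<lambda>y. p y * m y $ j $ i) x) / (2 * p x))"

definition stein_op :: "(real^'n::finite \<Rightarrow> real) \<Rightarrow> (real^'n \<Rightarrow> real^'n^'n)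
    \<Rightarrow> (real^'n \<Rightarrow> real^'n) \<Rightarrow> real^'n \<Rightarrow> real" where
  "stein_op p m g x = 2 * (drift p m x \<bullet> g x)
     + (\<Sum>i\<in>UNIV. \<Sum>j\<in>UNIV. m x $ i $ j * partial i (\<lambda>y. g y $ j) x)"

text \<open>E realises (an isometric copy of) the RKHS of R^D-valued functions of the
  matrix-valued kernel kappa: the Hilbert space 'h is mapped linearly and injectively
  onto a space of functions, kernel sections kappa(.,x) c belong to it, and the
  reproducing property <g, kappa(.,x) c> = <g(x), c> holds. The RKHS norm of E h is norm h.\<close>
definition vv_rkhs :: "(real^'n::finite \<Rightarrow> real^'n \<Rightarrow> real^'n^'n)
    \<Rightarrow> ('h::{real_inner,complete_space} \<Rightarrow> (real^'n \<Rightarrow> real^'n)) \<Rightarrow> bool" where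
  "vv_rkhs \<kappa> E \<longleftrightarrow>
     (\<forall>h k x. E (h + k) x = E h x + E k x) \<and>
     (\<forall>a h x. E (a *\<^sub>R h) x = a *\<^sub>R E h x) \<and>
     inj E \<and>
     (\<forall>x c. \<exists>k. E k = (\<lambda>y. \<kappa> y x *v c) \<and> (\<forall>h. inner h k = E h x \<bullet> c))"

definition stein_disc :: "(real^'n::finite) measure \<Rightarrow> ((real^'n \<Rightarrow> real^'n) \<Rightarrow> real^'n \<Rightarrow> real)
    \<Rightarrow> ('h::{real_inner,complete_space} \<Rightarrow> (real^'n \<Rightarrow> real^'n)) \<Rightarrow> ereal" where
  "stein_disc Q T E = (SUP h\<in>{h. norm h \<le> 1}.
      (if integrable Q (T (E h)) then ereal \<bar>\<integral>y. T (E h) y \<partial>Q\<bar> else \<infinity>))"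

definition unif_int_moments :: "real \<Rightarrow> (nat \<Rightarrow> (real^'n::finite) measure) \<Rightarrow> bool" where
  "unif_int_moments q Qs \<longleftrightarrow>
     ((\<lambda>r. limsup (\<lambda>n. ereal (\<integral>x. indicator {x. norm x > r} x * norm x powr q \<partial>Qs n)))
        \<longlongrightarrow> 0) at_top"

end

theory Submission
  imports Defs
begin

text \<open>A Lyapunov function g with \<open>T\<^sub>P g \<ge> \<parallel>x\<parallel>\<^sup>q \<one>{\<parallel>x\<parallel> > r} - \<epsilon>\<close> bounds the tail moment of Q by
  \<open>E\<^sub>Q[T\<^sub>P g] + \<epsilon>\<close>. Since \<open>T\<^sub>P\<close> is linear, \<open>|E\<^sub>Q[T\<^sub>P g]| \<le> \<parallel>g\<parallel> \<S>(Q, T\<^sub>P, G\<^sub>\<kappa>)\<close>, which tends to 0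
  along \<open>Q\<^sub>n\<close>; hence the tail moments beyond r are eventually at most \<open>2\<epsilon>\<close>, and they only
  decrease as r grows.\<close>

definition tail_moment :: "real \<Rightarrow> real \<Rightarrow> (real^'n::finite) measure \<Rightarrow> real" where
  "tail_moment q r Q = (\<integral>x. indicator {x. norm x > r} x * norm x powr q \<partial>Q)"

lemma tail_moment_nonneg: "tail_moment q r Q \<ge> 0"
  unfolding tail_moment_def by (intro integral_nonneg_AE) (auto simp: indicator_def)

lemma integrable_tail_moment:
  assumes "sets Q = sets borel" "integrable Q (\<lambda>x. norm x powr q)"
  shows "integrable Q (\<lambda>x::real^'n::finite. indicator {x. norm x > r} x * norm x powr q)"
proof -
  have "{x::real^'n. norm x > r} \<in> sets Q"
    using assms(1) by (simp add: open_Collect_less continuous_intros)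
  from integrable_real_mult_indicator[OF this assms(2)] show ?thesis
    by (simp add: mult.commute)
qed

lemma tail_moment_antimono:
  assumes "sets Q = sets borel" "integrable Q (\<lambda>x. norm x powr q)" "r \<le> r'"
  shows "tail_moment q r' Q \<le> tail_moment q r (Q :: (real^'n::finite) measure)"
  unfolding tail_moment_def using assms(3)
  by (intro integral_mono integrable_tail_moment[OF assms(1,2)]) (auto simp: indicator_def)

lemma tail_moment_le_lyapunov:
  assumes "prob_space Q" "integrable Q f"
    and "\<And>x. f x \<ge> norm x powr q * indicator {x. norm x > r} x - \<epsilon>"
    and "integrable Q (\<lambda>x. indicator {x. norm x > r} x * norm x powr q)"
  shows "tail_moment q r Q \<le> (\<integral>x. f x \<partial>Q) + \<epsilon>"
proof -
  interpret prob_space Q by fact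
  have "tail_moment q r Q \<le> (\<integral>x. f x + \<epsilon> \<partial>Q)"
    unfolding tail_moment_def using assms(3)
    by (intro integral_mono assms(4) Bochner_Integration.integrable_add assms(2))
      (auto simp: algebra_simps)
  also have "\<dots> = (\<integral>x. f x \<partial>Q) + \<epsilon>"
    using assms(2) prob_space by simp
  finally show ?thesis .
qed

lemma tendsto_limsup_zero_at_top:
  fixes X :: "real \<Rightarrow> nat \<Rightarrow> real"
  assumes nonneg: "\<And>r n. X r n \<ge> 0"
    and antimono: "\<And>r r' n. r \<le> r' \<Longrightarrow> X r' n \<le> X r n"
    and small: "\<And>\<epsilon>. \<epsilon> > 0 \<Longrightarrow> \<exists>r. eventually (\<lambda>n. X r n \<le> \<epsilon>) sequentially"
  shows "((\<lambda>r. limsup (\<lambda>n. ereal (X r n))) \<longlongrightarrow> 0) at_top"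
proof (rule order_tendstoI)
  fix a :: ereal assume "a < 0"
  have "0 \<le> limsup (\<lambda>n. ereal (X r n))" for r
    by (intro le_Limsup) (auto simp: nonneg)
  then show "eventually (\<lambda>r. a < limsup (\<lambda>n. ereal (X r n))) at_top"
    using \<open>a < 0\<close> by (intro always_eventually allI) (meson order.strict_trans2)
next
  fix a :: ereal assume "0 < a"
  then obtain b where b: "0 < b" "ereal b < a"
    by (metis dense ereal_dense2 ereal_less(2) less_ereal.simps(1) order.strict_trans)
  then obtain r where r: "eventually (\<lambda>n. X r n \<le> b) sequentially"
    using small by blast
  show "eventually (\<lambda>r. limsup (\<lambda>n. ereal (X r n)) < a) at_top"
    unfolding eventually_at_top_linorder
  proof (intro exI allI impI)
    fix r' assume "r' \<ge> r"
    have "eventually (\<lambda>n. X r' n \<le> b) sequentially"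
      by (rule eventually_mono[OF r]) (use antimono[OF \<open>r \<le> r'\<close>] in \<open>meson order_trans\<close>)
    then have "limsup (\<lambda>n. ereal (X r' n)) \<le> ereal b"
      by (intro Limsup_bounded) (auto elim: eventually_mono)
    then show "limsup (\<lambda>n. ereal (X r' n)) < a" using b by auto
  qed
qed

lemma partial_scaleR:
  fixes g :: "real^'n::finite \<Rightarrow> real^'n"
  assumes "g differentiable (at x)"
  shows "partial i (\<lambda>y. (a *\<^sub>R g y) $ j) x = a * partial i (\<lambda>y. g y $ j) x"
proof -
  have "((\<lambda>v. v $ j) \<circ> g \<circ> (\<lambda>t::real. x + t *\<^sub>R axis i 1)) differentiable (at 0)"
    using assms by (intro differentiable_chain_at derivative_intros)
      (auto intro: bounded_linear_imp_differentiable bounded_linear_vec_nth)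
  then have "DERIV (\<lambda>t. g (x + t *\<^sub>R axis i 1) $ j) 0 :> partial i (\<lambda>y. g y $ j) x"
    unfolding partial_def by (simp add: o_def DERIV_deriv_iff_real_differentiable)
  then have "DERIV (\<lambda>t. a * g (x + t *\<^sub>R axis i 1) $ j) 0 :> a * partial i (\<lambda>y. g y $ j) x"
    by (rule DERIV_cmult)
  then show ?thesis
    unfolding partial_def by (simp add: DERIV_imp_deriv)
qed

lemma stein_op_scaleR:
  fixes g :: "real^'n::finite \<Rightarrow> real^'n"
  assumes "g differentiable (at x)"
  shows "stein_op p m (\<lambda>y. a *\<^sub>R g y) x = a * stein_op p m g x"
  unfolding stein_op_def using partial_scaleR[OF assms, of _ a]
  by (simp add: sum_distrib_left algebra_simps)

lemma stein_disc_bound_unit_ball: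
  assumes "norm h \<le> 1" "stein_disc Q T E < ereal b"
  shows "integrable Q (T (E h)) \<and> \<bar>\<integral>x. T (E h) x \<partial>Q\<bar> < b"
proof -
  let ?t = "if integrable Q (T (E h)) then ereal \<bar>\<integral>x. T (E h) x \<partial>Q\<bar> else \<infinity>"
  have "?t \<le> stein_disc Q T E"
    unfolding stein_disc_def using assms(1) by (intro SUP_upper) auto
  with assms(2) have "?t < ereal b" by order
  then show ?thesis by (auto split: if_splits)
qed

text \<open>Beyond the unit ball, rescale h by \<open>1 / (\<parallel>h\<parallel> + 1)\<close> and use the linearity of \<open>T\<^sub>P\<close>.\<close>
lemma stein_disc_bound_rkhs:
  fixes E :: "'h::{real_inner,complete_space} \<Rightarrow> (real^'n::finite \<Rightarrow> real^'n)"
  assumes "vv_rkhs \<kappa> E" "\<And>x. E h differentiable (at x)" "b > 0"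
    and "stein_disc Q (stein_op p m) E < ereal (b / (norm h + 1))"
  shows "integrable Q (stein_op p m (E h)) \<and> \<bar>\<integral>x. stein_op p m (E h) x \<partial>Q\<bar> < b"
proof -
  define a where "a = 1 / (norm h + 1)"
  have a_pos: "a > 0"
    unfolding a_def by (simp add: add_pos_nonneg add.commute)
  have "norm (a *\<^sub>R h) \<le> 1"
    unfolding a_def using add_pos_nonneg[of 1 "norm h"] by (simp add: field_simps add.commute)
  moreover have "stein_disc Q (stein_op p m) E < ereal (a * b)"
    using assms(4) by (simp add: a_def)
  ultimately have bound: "integrable Q (stein_op p m (E (a *\<^sub>R h)))"
      "\<bar>\<integral>x. stein_op p m (E (a *\<^sub>R h)) x \<partial>Q\<bar> < a * b"
    using stein_disc_bound_unit_ball by blast+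
  have "E (a *\<^sub>R h) = (\<lambda>x. a *\<^sub>R E h x)"
    using assms(1) unfolding vv_rkhs_def by auto
  then have scaled: "stein_op p m (E (a *\<^sub>R h)) = (\<lambda>x. a * stein_op p m (E h) x)"
    using stein_op_scaleR[OF assms(2)] by auto
  show ?thesis
    using bound a_pos unfolding scaled by (simp add: abs_mult)
qed

theorem mainTheorem5:
  fixes p :: "real^'n::finite \<Rightarrow> real"
    and \<sigma> :: "real^'n \<Rightarrow> real^'k::finite^'n"
    and c :: "real^'n \<Rightarrow> real^'n^'n"
    and m :: "real^'n \<Rightarrow> real^'n^'n"
    and \<kappa> :: "real^'n \<Rightarrow> real^'n \<Rightarrow> real^'n^'n"
    and E :: "'h::{real_inner,complete_space} \<Rightarrow> (real^'n \<Rightarrow> real^'n)"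
    and Q :: "nat \<Rightarrow> (real^'n) measure"
    and q :: real
  assumes p_pos: "\<forall>x. p x > 0"
    and p_density: "integrable lborel p" "(\<integral>x. p x \<partial>lborel) = 1"
    and m_def: "\<forall>x. m x = \<sigma> x ** transpose (\<sigma> x) + c x"
    and c_skew: "\<forall>x. transpose (c x) = - c x"
    and pm_diff: "\<forall>i j x. (\<lambda>y. p y * m y $ i $ j) differentiable (at x)"
    and rkhs: "vv_rkhs \<kappa> E"
    and G_diff: "\<forall>h x. E h differentiable (at x)"
    and q_pos: "q > 0"
    and Q_prob: "\<forall>n. prob_space (Q n)"
    and Q_borel: "\<forall>n. sets (Q n) = sets borel"
    and Q_moment: "\<forall>n. integrable (Q n) (\<lambda>x. norm x powr q)"
    and lyap: "\<forall>\<epsilon>>0. \<exists>r>0. \<exists>h. \<forall>x.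
                 stein_op p m (E h) x \<ge> norm x powr q * indicator {x. norm x > r} x - \<epsilon>"
    and conv: "(\<lambda>n. stein_disc (Q n) (stein_op p m) E) \<longlonglongrightarrow> 0"
  shows "unif_int_moments q Q"
  unfolding unif_int_moments_def tail_moment_def[symmetric]
proof (rule tendsto_limsup_zero_at_top)
  fix \<epsilon> :: real assume "\<epsilon> > 0"
  then obtain r h where r_h: "\<forall>x. stein_op p m (E h) x \<ge> norm x powr q * indicator {x. norm x > r} x - \<epsilon>/2"
    using lyap by (meson half_gt_zero)
  have "eventually (\<lambda>n. stein_disc (Q n) (stein_op p m) E < ereal (\<epsilon>/2 / (norm h + 1))) sequentially"
    using conv \<open>\<epsilon> > 0\<close> by (intro order_tendstoD(2)) (auto intro!: divide_pos_pos add_nonneg_pos)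
  then have "eventually (\<lambda>n. tail_moment q r (Q n) \<le> \<epsilon>) sequentially"
  proof eventually_elim
    case (elim n)
    have "integrable (Q n) (stein_op p m (E h))" "\<bar>\<integral>x. stein_op p m (E h) x \<partial>Q n\<bar> < \<epsilon>/2"
      using stein_disc_bound_rkhs[OF rkhs, of h "\<epsilon>/2" "Q n" p m] G_diff \<open>\<epsilon> > 0\<close> elim
      by simp_all
    moreover note tail_moment_le_lyapunov[OF Q_prob[rule_format] this(1) r_h[rule_format]
        integrable_tail_moment[OF Q_borel[rule_format] Q_moment[rule_format]]]
    ultimately show ?case by linarith
  qed
  then show "\<exists>r. eventually (\<lambda>n. tail_moment q r (Q n) \<le> \<epsilon>) sequentially" ..
qed (simp_all add: tail_moment_nonneg tail_moment_antimono[OF Q_borel[rule_format] Q_moment[rule_format]])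

end
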